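(* Let $n\ge 2$ be an integer, $A,B$ real $n\times n$ matrices, $M := A + iB$, $\alpha := \frac1n s(A)$, $\beta := \frac1n\big(q(A)+q(B)\big)$, and $\kappa := \frac{2n\beta - \alpha^2}{2n-1}$. Suppose $\beta>0$. Then: if $\alpha^2 < \beta$: $|\det M| \le \beta^{n/2}$; if $\alpha^2 = \beta$: $|\det M| \le |\alpha|^{1/2}\kappa^{\frac{2n-1}{4}} = \beta^{n/2}$; if $\alpha^2 > \beta$: $|\det M| \le |\alpha|^{1/2}\kappa^{\frac{2n-1}{4}} < \beta^{n/2}$.
   Context: For a real matrix $X$, $s(X)$ denotes the sum of all entries of $X$ and $q(X)$ the sum of the squares of all entries of $X$. *)

theory Defs
  imports "HOL-Analysis.Analysis"
begin

definition msum :: "real^'n^'m \<Rightarrow> real" where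
  "msum X = (\<Sum>i\<in>UNIV. \<Sum>j\<in>UNIV. X $ i $ j)"

definition msq :: "real^'n^'m \<Rightarrow> real" where
  "msq X = (\<Sum>i\<in>UNIV. \<Sum>j\<in>UNIV. (X $ i $ j)^2)"

definition cmat :: "real^'n^'m \<Rightarrow> real^'n^'m \<Rightarrow> complex^'n^'m" where
  "cmat A B = (\<chi> i j. Complex (A $ i $ j) (B $ i $ j))"

end

theory Submission
  imports Defs
begin

text \<open>
  Hadamard's inequality bounds \<open>|det M|^2\<close> by the product of the squared row norms of
  \<open>M = A + iB\<close>, which sum to \<open>n\<beta>\<close>; AM-GM gives \<open>|det M|^2 \<le> \<beta>^n\<close>.
  For the sharper bound, multiply \<open>M\<close> by a real orthogonal \<open>Q\<close> one of whose columns is the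
  normalised all-ones vector \<open>u\<close>. Then \<open>|det MQ| = |det M|\<close>, and that column of \<open>MQ\<close> has
  squared norm \<open>t \<ge> |A u|^2 \<ge> (u \<bullet> A u)^2 = \<alpha>^2\<close>. Multiplying the Hadamard bounds for the
  rows of \<open>M\<close> and the columns of \<open>MQ\<close> bounds \<open>|det M|^4\<close> by a product of \<open>2n\<close> numbers
  with sum \<open>2n\<beta>\<close>, one of which is \<open>t\<close>. AM-GM on the other \<open>k = 2n - 1\<close> factors gives
  \<open>|det M|^4 \<le> t ((2n\<beta> - t)/k)^k\<close>; this function of \<open>t\<close> decreases on \<open>[\<beta>, 2n\<beta>]\<close>, so
  for \<open>\<alpha>^2 \<ge> \<beta>\<close> it is at most its value \<open>\<alpha>^2 \<kappa>^k\<close> at \<open>t = \<alpha>^2\<close>.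
\<close>

definition cinner :: "complex^'n \<Rightarrow> complex^'n \<Rightarrow> complex" where
  "cinner x y = (\<Sum>k\<in>UNIV. x$k * cnj (y$k))"

lemma norm_vec_power2: "(norm x)^2 = (\<Sum>k\<in>UNIV. (norm (x$k))^2)"
  by (simp add: norm_vec_def L2_set_def sum_nonneg)

lemma cinner_self: "cinner x x = of_real ((norm x)^2)"
  unfolding cinner_def norm_vec_power2 of_real_sum
  by (rule sum.cong) (simp, metis complex_norm_square)

lemma cinner_diff_left: "cinner (x - y) z = cinner x z - cinner y z"
  by (simp add: cinner_def left_diff_distrib sum_subtractf)

lemma cinner_add_left: "cinner (x + y) z = cinner x z + cinner y z"
  by (simp add: cinner_def distrib_right sum.distrib)

lemma cinner_add_right: "cinner z (x + y) = cinner z x + cinner z y"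
  by (simp add: cinner_def distrib_left sum.distrib)

lemma cinner_scale_left: "cinner (c *s x) z = c * cinner x z"
  by (simp add: cinner_def sum_distrib_left mult.assoc)

lemma cinner_scale_right: "cinner x (c *s z) = cnj c * cinner x z"
  by (simp add: cinner_def sum_distrib_left mult_ac)

lemma cinner_sum_left: "cinner (sum f S) z = (\<Sum>j\<in>S. cinner (f j) z)"
  by (induction S rule: infinite_finite_induct) (auto simp: cinner_def distrib_right sum.distrib)

lemma cinner_sum_right: "cinner z (sum f S) = (\<Sum>j\<in>S. cinner z (f j))"
  by (induction S rule: infinite_finite_induct) (auto simp: cinner_def distrib_left sum.distrib)

lemma cinner_commute: "cinner x y = cnj (cinner y x)"
  by (simp add: cinner_def mult.commute)

lemma norm_add_power2_cinner_eq_0: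
  assumes "cinner x y = 0"
  shows "(norm (x + y))^2 = (norm x)^2 + (norm y)^2"
proof -
  have "cinner y x = 0"
    using assms cinner_commute[of y x] by simp
  then have "(of_real ((norm (x + y))^2) :: complex) = of_real ((norm x)^2 + (norm y)^2)"
    using assms by (simp only: of_real_add cinner_self[symmetric] cinner_add_left cinner_add_right) simp
  then show ?thesis
    using of_real_eq_iff by blast
qed

lemma cinner_residual_projection:
  fixes x :: "complex^'n" and v :: "'a \<Rightarrow> complex^'n"
  assumes "finite S"
    and orth: "\<And>i j. i \<in> S \<Longrightarrow> j \<in> S \<Longrightarrow> i \<noteq> j \<Longrightarrow> cinner (v i) (v j) = 0"
  defines "y \<equiv> \<Sum>j\<in>S. (cinner x (v j) / of_real ((norm (v j))^2)) *s v j"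
  shows "\<And>l. l \<in> S \<Longrightarrow> cinner (x - y) (v l) = 0"
    and "norm (x - y) \<le> norm x"
proof -
  have "cinner y (v l) = cinner x (v l)" if l: "l \<in> S" for l
  proof -
    have "cinner y (v l) = (\<Sum>j\<in>S. (cinner x (v j) / of_real ((norm (v j))^2)) * cinner (v j) (v l))"
      unfolding y_def cinner_sum_left cinner_scale_left ..
    also have "\<dots> = (cinner x (v l) / of_real ((norm (v l))^2)) * cinner (v l) (v l)"
      using l assms by (subst sum.remove[of S l]) (auto intro!: sum.neutral)
    also have "\<dots> = cinner x (v l)"
      by (cases "v l = 0") (simp_all add: cinner_self cinner_def)
    finally show ?thesis .
  qed
  then show orth_residual: "cinner (x - y) (v l) = 0" if "l \<in> S" for l
    using that by (simp add: cinner_diff_left)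
  have "cinner (x - y) (\<Sum>j\<in>S. (cinner x (v j) / of_real ((norm (v j))^2)) *s v j) = 0"
    by (simp add: cinner_sum_right cinner_scale_right orth_residual)
  then have "cinner (x - y) y = 0"
    unfolding y_def .
  then have "(norm x)^2 = (norm (x - y))^2 + (norm y)^2"
    using norm_add_power2_cinner_eq_0 by fastforce
  then show "norm (x - y) \<le> norm x"
    by (simp add: power2_le_imp_le)
qed

lemma orthogonalize_rows:
  fixes M :: "complex^'n^'n"
  assumes "finite S"
  shows "\<exists>N. det N = det M \<and> (\<forall>i\<in>S. \<forall>j\<in>S. i \<noteq> j \<longrightarrow> cinner (N$i) (N$j) = 0)
           \<and> (\<forall>i. norm (N$i) \<le> norm (M$i))"
  using assms
proof (induction S rule: finite_induct)
  case empty
  show ?case by auto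
next
  case (insert k S)
  then obtain N where N: "det N = det M" "\<And>i j. i\<in>S \<Longrightarrow> j\<in>S \<Longrightarrow> i \<noteq> j \<Longrightarrow> cinner (N$i) (N$j) = 0"
    "\<And>i. norm (N$i) \<le> norm (M$i)"
    by blast
  define y where "y = (\<Sum>j\<in>S. (cinner (N$k) (N$j) / of_real ((norm (N$j))^2)) *s N$j)"
  define N' where "N' = (\<chi> i. if i = k then row k N + - y else row i N)"
  have row: "row i N = N$i" for i
    by (simp add: row_def vec_eq_iff)
  have N'_k: "N'$k = N$k - y" and N'_other: "i \<noteq> k \<Longrightarrow> N'$i = N$i" for i
    by (simp_all add: N'_def row)
  have "- y \<in> vec.span {row j N |j. j \<noteq> k}"
    unfolding y_def
    by (intro vec.span_neg vec.span_sum vec.span_scale vec.span_base) (use insert.hyps in \<open>auto simp: row\<close>)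
  then have det_N': "det N' = det M"
    unfolding N'_def N(1)[symmetric] by (rule det_row_span)
  have residual: "\<And>l. l \<in> S \<Longrightarrow> cinner (N$k - y) (N$l) = 0" "norm (N$k - y) \<le> norm (N$k)"
    using cinner_residual_projection[where x = "N$k" and v = "\<lambda>j. N$j", OF insert.hyps(1) N(2)]
    unfolding y_def by blast+
  moreover have "cinner (N'$i) (N'$j) = 0" if "i \<in> insert k S" "j \<in> insert k S" "i \<noteq> j" for i j
    using residual(1) cinner_commute[of "N$i" "N$k - y"] that insert.hyps(2) N(2) N'_k N'_other
    by (cases "i = k"; cases "j = k") auto
  moreover have "norm (N'$i) \<le> norm (M$i)" for i
    using residual(2) N(3)[of i] N(3)[of k] N'_k N'_other by (cases "i = k") auto
  ultimately show ?case
    using det_N' by blast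
qed

lemma det_map_cnj: "det (\<chi> i j. cnj (A$i$j)) = cnj (det (A::complex^'n^'n))"
  by (simp add: det_def)

lemma hadamard_inequality:
  fixes M :: "complex^'n^'n"
  shows "(cmod (det M))^2 \<le> (\<Prod>i\<in>UNIV. (norm (M$i))^2)"
proof -
  obtain N where N: "det N = det M" "\<And>i j. i \<noteq> j \<Longrightarrow> cinner (N$i) (N$j) = 0"
    "\<And>i. norm (N$i) \<le> norm (M$i)"
    using orthogonalize_rows[of "UNIV::'n set" M] by auto
  define G where "G = N ** (\<chi> i j. cnj (N$j$i))"
  have G: "G$i$j = cinner (N$i) (N$j)" for i j
    by (simp add: G_def matrix_matrix_mult_def cinner_def)
  have "det (\<chi> i j. cnj (N$j$i)) = cnj (det N)"
    using det_map_cnj[of "transpose N"] det_transpose[of N] by (simp add: transpose_def)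
  then have "of_real ((cmod (det N))^2) = det G"
    by (simp add: G_def det_mul flip: complex_norm_square)
  also have "\<dots> = (\<Prod>i\<in>UNIV. of_real ((norm (N$i))^2))"
    by (subst det_diagonal) (simp_all add: G N(2) cinner_self)
  finally have "(cmod (det N))^2 = (\<Prod>i\<in>UNIV. (norm (N$i))^2)"
    by (metis of_real_eq_iff of_real_prod)
  also have "\<dots> \<le> (\<Prod>i\<in>UNIV. (norm (M$i))^2)"
    by (rule prod_mono) (simp add: N(3) power_mono)
  finally show ?thesis
    using N(1) by simp
qed

lemma transpose_nth: "transpose X $ j = column j X"
  by (simp add: transpose_def column_def)

lemma hadamard_inequality_columns:
  fixes M :: "complex^'n^'n"
  shows "(cmod (det M))^2 \<le> (\<Prod>j\<in>UNIV. (norm (column j M))^2)"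
  using hadamard_inequality[of "transpose M"] by (simp add: det_transpose transpose_nth)

lemma prod_le_mean_power:
  fixes x :: "'a \<Rightarrow> real"
  assumes "finite S" "S \<noteq> {}" and nonneg: "\<And>i. i \<in> S \<Longrightarrow> x i \<ge> 0"
  shows "(\<Prod>i\<in>S. x i) \<le> ((\<Sum>i\<in>S. x i) / card S) ^ card S"
proof -
  define P where "P = (\<Prod>i\<in>S. x i)"
  have "P \<ge> 0"
    unfolding P_def by (simp add: prod_nonneg nonneg)
  moreover have "card S > 0"
    using assms card_gt_0_iff by blast
  ultimately have "P = (P powr (1 / card S)) ^ card S"
    by (cases "P = 0") (simp_all add: powr_power)
  also have "\<dots> \<le> ((\<Sum>i\<in>S. x i) / card S) ^ card S"
    using arith_geom_mean[OF assms] unfolding P_def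
    by (intro power_mono) (simp_all add: sum_divide_distrib)
  finally show ?thesis
    unfolding P_def .
qed

lemma prod_mult_prod_le_mean_power:
  fixes f :: "'a \<Rightarrow> real" and g :: "'b \<Rightarrow> real"
  assumes "finite I" "finite J" "I \<noteq> {}"
    and "\<And>i. i \<in> I \<Longrightarrow> f i \<ge> 0" "\<And>j. j \<in> J \<Longrightarrow> g j \<ge> 0"
  shows "(\<Prod>i\<in>I. f i) * (\<Prod>j\<in>J. g j)
           \<le> (((\<Sum>i\<in>I. f i) + (\<Sum>j\<in>J. g j)) / (card I + card J)) ^ (card I + card J)"
proof -
  define x where "x = case_sum f g"
  have "(\<Prod>z\<in>I <+> J. x z) \<le> ((\<Sum>z\<in>I <+> J. x z) / card (I <+> J)) ^ card (I <+> J)"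
    using assms by (intro prod_le_mean_power) (auto simp: x_def)
  then show ?thesis
    using assms by (simp add: prod.Plus sum.Plus card_Plus x_def comp_def)
qed

lemma mult_complement_power_strict_decreasing:
  fixes a t S :: real and k :: nat
  assumes "k \<ge> 1" and "S / (k + 1) \<le> a" and "a < t" and "t \<le> S"
  shows "t * ((S - t) / k) ^ k < a * ((S - a) / k) ^ k"
proof -
  define p where "p = (S - t) / k"
  define q where "q = (S - a) / k"
  have k_pos: "real k > 0"
    using assms(1) by simp
  have "S > 0"
  proof -
    have "S / (k + 1) < S"
      using assms by linarith
    then have "0 < S * k"
      by (simp add: field_simps)
    then show ?thesis
      using k_pos by (simp add: zero_less_mult_iff)
  qed
  then have "S / (k + 1) > 0"
    by simp
  then have a_pos: "a > 0"
    using assms(2) by linarith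
  have p_nonneg: "p \<ge> 0"
    unfolding p_def using assms(4) k_pos by simp
  have p_less_q: "p < q"
    unfolding p_def q_def using assms(3) k_pos by (simp add: divide_strict_right_mono)
  have "q \<le> S / (k + 1)"
  proof -
    have "S - a \<le> k * (S / (k + 1))"
      using assms(2) k_pos by (simp add: field_simps)
    then show ?thesis
      unfolding q_def using k_pos by (simp add: field_simps)
  qed
  then have p_less_a: "p < a"
    using p_less_q assms(2) by simp
  have t_eq: "t = a + k * (q - p)"
    unfolding p_def q_def using k_pos by (simp add: field_simps)
  show ?thesis
  proof (cases "p = 0")
    case True
    then show ?thesis
      using assms(1) a_pos p_less_q unfolding p_def[symmetric] q_def[symmetric]
      by (simp add: zero_power)
  next
    case False
    then have p_pos: "p > 0"
      using p_nonneg by simp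
    \<comment> \<open>Bernoulli: \<open>(q/p)^k \<ge> 1 + k (q - p)/p > 1 + k (q - p)/a = t/a\<close>.\<close>
    have "1 + k * ((q - p) / p) \<le> (1 + (q - p) / p) ^ k"
      by (rule Bernoulli_inequality) (use p_pos p_less_q in \<open>simp add: field_simps\<close>)
    also have "1 + (q - p) / p = q / p"
      using p_pos by (simp add: field_simps)
    finally have bernoulli: "1 + k * ((q - p) / p) \<le> q ^ k / p ^ k"
      by (simp add: power_divide)
    have "t / a = 1 + k * (q - p) / a"
      using t_eq a_pos by (simp add: field_simps)
    also have "\<dots> < 1 + k * (q - p) / p"
      using k_pos p_less_q p_pos p_less_a
      by (intro add_strict_left_mono divide_strict_left_mono) (auto intro: mult_pos_pos)
    finally have "t / a < q ^ k / p ^ k"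
      using bernoulli by simp
    then have "t * p ^ k < a * q ^ k"
      using a_pos p_pos by (simp add: field_simps)
    then show ?thesis
      unfolding p_def q_def .
  qed
qed

lemma powr_half_power2:
  fixes b :: real
  assumes "b \<ge> 0" "n > 0"
  shows "(b powr (real n / 2))^2 = b^n"
  using assms by (cases "b = 0") (simp_all add: powr_power powr_realpow)

lemma sqrt_abs_mult_powr_power4:
  fixes a c :: real
  assumes "c \<ge> 0" "k > 0"
  shows "(sqrt \<bar>a\<bar> * c powr (real k / 4)) ^ 4 = a^2 * c^k"
proof -
  have "(sqrt \<bar>a\<bar>) ^ 4 = a^2"
    using power_mult[of "sqrt \<bar>a\<bar>" 2 2] by simp
  moreover have "(c powr (real k / 4)) ^ 4 = c^k"
    using assms by (cases "c = 0") (simp_all add: powr_power powr_realpow)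
  ultimately show ?thesis
    by (simp add: power_mult_distrib)
qed

lemma sqrt_abs_mult_powr_eq_powr_half:
  fixes a b :: real
  assumes "a^2 = b"
  shows "sqrt \<bar>a\<bar> * b powr ((2 * real n - 1) / 4) = b powr (real n / 2)"
proof (cases "a = 0")
  case False
  then have b: "b = \<bar>a\<bar> powr 2"
    using assms by (simp add: powr_realpow)
  have "sqrt \<bar>a\<bar> * b powr ((2 * real n - 1) / 4) = \<bar>a\<bar> powr (1 / 2) * \<bar>a\<bar> powr ((2 * real n - 1) / 2)"
  proof -
    have exponent: "2 * ((2 * real n - 1) / 4) = (2 * real n - 1) / 2"
      by simp
    show ?thesis
      unfolding b powr_powr exponent by (simp add: powr_half_sqrt)
  qed
  also have "\<dots> = \<bar>a\<bar> powr (2 * (real n / 2))"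
    unfolding powr_add[symmetric] by (simp add: field_simps)
  also have "\<dots> = b powr (real n / 2)"
    unfolding b powr_powr ..
  finally show ?thesis .
qed (use assms in simp)

lemma sqrt_abs_mult_powr_less_powr_half:
  fixes a b :: real and n :: nat
  assumes "n \<ge> 1" "b < a^2" "a^2 \<le> 2 * real n * b"
  shows "sqrt \<bar>a\<bar> * ((2 * real n * b - a^2) / (2 * real n - 1)) powr ((2 * real n - 1) / 4)
           < b powr (real n / 2)"
proof -
  define k where "k = 2 * n - 1"
  have k: "k \<ge> 1" "real k = 2 * real n - 1" "k + 1 = 2 * n"
    unfolding k_def using assms(1) by (linarith, simp_all add: of_nat_diff)
  have "b > 0"
  proof (rule ccontr)
    assume "\<not> b > 0"
    then have "2 * real n * b \<le> 1 * b"
      using assms(1) by (intro mult_right_mono_neg) auto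
    then show False
      using assms(2,3) by simp
  qed
  have \<kappa>_nonneg: "(2 * real n * b - a^2) / (2 * real n - 1) \<ge> 0"
    using assms(1,3) by simp
  have "2 * real n * b / (real k + 1) \<le> b"
    using assms(1) k(3) by (simp add: k(2))
  then have "a^2 * ((2 * real n * b - a^2) / k) ^ k < b * ((2 * real n * b - b) / k) ^ k"
    using k(1) assms(2,3) by (intro mult_complement_power_strict_decreasing) (auto simp: add.commute)
  also have "(2 * real n * b - b) / k = b"
    using assms(1) by (simp add: k(2) field_simps)
  also have "b * b ^ k = b ^ (n * 2)"
    using k(3) by (simp add: mult.commute flip: power_Suc)
  also have "\<dots> = ((b powr (real n / 2))^2)^2"
    using powr_half_power2[of b n] \<open>b > 0\<close> assms(1) by (simp add: power_mult)
  finally have "(sqrt \<bar>a\<bar> * ((2 * real n * b - a^2) / (2 * real n - 1)) powr ((2 * real n - 1) / 4)) ^ 4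
      < (b powr (real n / 2)) ^ 4"
    using sqrt_abs_mult_powr_power4[OF \<kappa>_nonneg, of k a] k(1)
    by (simp add: k(2) flip: power_mult)
  then show ?thesis
    by (rule power_less_imp_less_base) simp
qed

lemma cmat_mult_of_real:
  fixes A B Q :: "real^'n^'n"
  shows "cmat A B ** (\<chi> i j. complex_of_real (Q$i$j)) = cmat (A ** Q) (B ** Q)"
  by (simp add: cmat_def matrix_matrix_mult_def vec_eq_iff complex_eq_iff Re_sum Im_sum)

lemma det_of_real_matrix:
  fixes Q :: "real^'n^'n"
  shows "det (\<chi> i j. complex_of_real (Q$i$j)) = of_real (det Q)"
  by (simp add: det_def)

lemma msq_nonneg: "msq X \<ge> 0"
  by (simp add: msq_def sum_nonneg)

lemma msq_eq_sum_norm_rows: "msq X = (\<Sum>i\<in>UNIV. (norm (X$i))^2)"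
  by (simp add: msq_def norm_vec_power2)

lemma norm_row_cmat_power2: "(norm (cmat X Y $ i))^2 = (norm (X$i))^2 + (norm (Y$i))^2"
  by (simp add: norm_vec_power2 cmat_def cmod_power2 sum.distrib)

lemma sum_norm_rows_cmat: "(\<Sum>i\<in>UNIV. (norm (cmat X Y $ i))^2) = msq X + msq Y"
  by (simp only: norm_row_cmat_power2 sum.distrib msq_eq_sum_norm_rows)

lemma msq_transpose: "msq (transpose X) = msq X"
  unfolding msq_def transpose_def by simp (rule sum.swap)

lemma msq_mult_orthogonal_matrix:
  fixes X Q :: "real^'n^'n"
  assumes "orthogonal_matrix Q"
  shows "msq (X ** Q) = msq X"
proof -
  have row: "(X ** Q)$i = transpose Q *v (X$i)" for i
    by (simp add: vec_eq_iff matrix_matrix_mult_def vector_matrix_mult_def)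
  have "orthogonal_transformation (\<lambda>x. transpose Q *v x)"
    using assms by (simp add: orthogonal_transformation_matrix matrix_vector_mul_linear
        del: transpose_matrix_vector)
  then have "norm ((X ** Q)$i) = norm (X$i)" for i
    unfolding row by (rule orthogonal_transformation_norm)
  then show ?thesis
    by (simp add: msq_eq_sum_norm_rows)
qed

lemma cmod_det_cmat_power2_le:
  fixes A B :: "real^'n^'n"
  shows "(cmod (det (cmat A B)))^2 \<le> ((msq A + msq B) / CARD('n)) ^ CARD('n)"
  using hadamard_inequality[of "cmat A B"]
    prod_le_mean_power[of UNIV "\<lambda>i. (norm (cmat A B $ i))^2"]
  by (simp add: sum_norm_rows_cmat)

lemma orthogonal_matrix_constant_column:
  "\<exists>Q :: real^'n^'n. \<exists>j. orthogonal_matrix Q \<and> (\<forall>i. Q$i$j = 1 / sqrt CARD('n))"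
proof -
  fix j :: 'n
  define u :: "real^'n" where "u = (\<chi> i. 1 / sqrt CARD('n))"
  have "norm u = 1"
    by (simp add: u_def norm_vec_def L2_set_def power_divide)
  then obtain Q where "orthogonal_matrix Q" "Q *v axis j 1 = u"
    using orthogonal_matrix_exists_basis by blast
  moreover from this(2) have "Q$i$j = 1 / sqrt CARD('n)" for i
    by (metis column_def matrix_vector_mult_basis u_def vec_lambda_beta)
  ultimately show ?thesis
    by blast
qed

lemma msum_square_le_column_norm:
  fixes A Q :: "real^'n^'n"
  assumes "\<And>i. Q$i$j = 1 / sqrt CARD('n)"
  shows "(msum A / CARD('n))^2 \<le> (norm (column j (A ** Q)))^2"
proof -
  define u :: "real^'n" where "u = (\<chi> i. 1 / sqrt CARD('n))"
  have "norm u = 1"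
    by (simp add: u_def norm_vec_def L2_set_def power_divide)
  have "column j (A ** Q) = A *v u"
    by (simp add: column_def matrix_matrix_mult_def matrix_vector_mult_def assms u_def)
  moreover have "inner u (A *v u) = msum A / CARD('n)"
    by (simp add: inner_vec_def u_def matrix_vector_mult_def msum_def sum_distrib_left
        sum_divide_distrib mult_ac)
  moreover have "\<bar>inner u (A *v u)\<bar> \<le> norm (A *v u)"
    using Cauchy_Schwarz_ineq2[of u "A *v u"] \<open>norm u = 1\<close> by simp
  ultimately show ?thesis
    by (metis abs_ge_zero power2_abs power_mono)
qed

lemma msq_eq_sum_norm_columns: "msq X = (\<Sum>j\<in>UNIV. (norm (column j X))^2)"
  using msq_eq_sum_norm_rows[of "transpose X"] by (simp add: msq_transpose transpose_nth)

lemma msum_power2_le_msq: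
  fixes A :: "real^'n^'n"
  shows "(msum A / CARD('n))^2 \<le> msq A"
proof -
  obtain Q :: "real^'n^'n" and j where Q: "orthogonal_matrix Q" "\<And>i. Q$i$j = 1 / sqrt CARD('n)"
    using orthogonal_matrix_constant_column by blast
  have "(msum A / CARD('n))^2 \<le> (norm (column j (A ** Q)))^2"
    by (rule msum_square_le_column_norm[OF Q(2)])
  also have "\<dots> \<le> msq (A ** Q)"
    unfolding msq_eq_sum_norm_columns by (rule member_le_sum) simp_all
  finally show ?thesis
    by (simp add: msq_mult_orthogonal_matrix[OF Q(1)])
qed

lemma column_cmat: "column j (cmat X Y) = cmat (transpose X) (transpose Y) $ j"
  by (simp add: column_def cmat_def transpose_def)

lemma cmod_det_cmat_power4_le_column:
  fixes A B :: "real^'n^'n"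
  defines "S \<equiv> msq A + msq B"
  shows "\<exists>t. (msum A / CARD('n))^2 \<le> t \<and> t \<le> S \<and>
           (cmod (det (cmat A B)))^4 \<le> t * ((2 * S - t) / (2 * CARD('n) - 1)) ^ (2 * CARD('n) - 1)"
proof -
  obtain Q :: "real^'n^'n" and j0 where Q: "orthogonal_matrix Q" "\<And>i. Q$i$j0 = 1 / sqrt CARD('n)"
    using orthogonal_matrix_constant_column by blast
  define M where "M = cmat A B"
  define N where "N = cmat (A ** Q) (B ** Q)"
  define r where "r i = (norm (M$i))^2" for i
  define c where "c j = (norm (column j N))^2" for j
  define t where "t = c j0"
  have "N = M ** (\<chi> i j. complex_of_real (Q$i$j))"
    unfolding M_def N_def by (simp add: cmat_mult_of_real)
  then have det_N: "cmod (det N) = cmod (det M)"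
    using det_orthogonal_matrix[OF Q(1)] by (auto simp: det_mul det_of_real_matrix norm_mult)
  have c_eq: "c j = (norm (column j (A ** Q)))^2 + (norm (column j (B ** Q)))^2" for j
    unfolding c_def N_def column_cmat norm_row_cmat_power2 transpose_nth ..
  have sum_r: "sum r UNIV = S" and sum_c: "sum c UNIV = S"
    using sum_norm_rows_cmat[of "transpose (A ** Q)" "transpose (B ** Q)"]
    by (simp_all add: r_def c_def M_def N_def S_def sum_norm_rows_cmat column_cmat msq_transpose
        msq_mult_orthogonal_matrix[OF Q(1)])
  have c_nonneg: "c j \<ge> 0" for j
    by (simp add: c_def)
  have "(msum A / CARD('n))^2 \<le> t"
    using msum_square_le_column_norm[OF Q(2), of A] unfolding t_def c_eq
    by (simp add: add_increasing2)
  moreover have "t \<le> S"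
    unfolding t_def sum_c[symmetric] by (rule member_le_sum) (simp_all add: c_nonneg)
  moreover have "(cmod (det M))^4 \<le> t * ((2 * S - t) / (2 * CARD('n) - 1)) ^ (2 * CARD('n) - 1)"
  proof -
    have card_rest: "card (UNIV - {j0}) = CARD('n) - 1" and n_pos: "CARD('n) \<ge> 1"
      by (simp_all add: card_Diff_singleton Suc_leI)
    have "(cmod (det M))^4 = (cmod (det M))^2 * (cmod (det N))^2"
      by (simp add: det_N flip: power_add)
    also have "\<dots> \<le> prod r UNIV * prod c UNIV"
      using hadamard_inequality[of M] hadamard_inequality_columns[of N]
      by (intro mult_mono) (simp_all add: r_def c_def prod_nonneg)
    also have "\<dots> = t * (prod r UNIV * prod c (UNIV - {j0}))"
      by (simp add: t_def prod.remove[of UNIV j0 c])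
    also have "\<dots> \<le> t * ((2 * S - t) / (2 * CARD('n) - 1)) ^ (2 * CARD('n) - 1)"
    proof (rule mult_left_mono)
      have "sum c (UNIV - {j0}) = S - t"
        using sum_c by (simp add: t_def sum_diff1)
      moreover have "CARD('n) + (CARD('n) - 1) = 2 * CARD('n) - 1"
        using n_pos by simp
      ultimately show "prod r UNIV * prod c (UNIV - {j0})
          \<le> ((2 * S - t) / (2 * CARD('n) - 1)) ^ (2 * CARD('n) - 1)"
        using prod_mult_prod_le_mean_power[of UNIV "UNIV - {j0}" r c] card_rest sum_r
        by (simp add: r_def c_nonneg of_nat_diff)
    qed (simp add: t_def c_nonneg)
    finally show ?thesis .
  qed
  ultimately show ?thesis
    unfolding M_def by blast
qed

lemma cmod_det_cmat_le:
  fixes A B :: "real^'n^'n"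
  shows "cmod (det (cmat A B)) \<le> ((msq A + msq B) / CARD('n)) powr (CARD('n) / 2)"
proof -
  have "(((msq A + msq B) / CARD('n)) powr (CARD('n) / 2))^2 = ((msq A + msq B) / CARD('n)) ^ CARD('n)"
    by (intro powr_half_power2) (simp_all add: msq_nonneg)
  then show ?thesis
    using cmod_det_cmat_power2_le[of A B]
      power2_le_imp_le[of "cmod (det (cmat A B))" "((msq A + msq B) / CARD('n)) powr (CARD('n) / 2)"]
    by simp
qed

lemma cmod_det_cmat_le_msum:
  fixes A B :: "real^'n^'n"
  defines "n \<equiv> CARD('n)"
  defines "\<alpha> \<equiv> msum A / n" and "\<beta> \<equiv> (msq A + msq B) / n"
  defines "\<kappa> \<equiv> (2 * real n * \<beta> - \<alpha>^2) / (2 * real n - 1)"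
  assumes "\<beta> \<le> \<alpha>^2"
  shows "cmod (det (cmat A B)) \<le> sqrt \<bar>\<alpha>\<bar> * \<kappa> powr ((2 * real n - 1) / 4)"
proof -
  define k where "k = 2 * n - 1"
  have "n \<ge> 1"
    unfolding n_def by (simp add: Suc_leI)
  then have k: "k \<ge> 1" "real k = 2 * real n - 1" "real k + 1 = 2 * real n"
    unfolding k_def by (linarith, simp_all add: of_nat_diff)
  define S where "S = msq A + msq B"
  have S: "S = real n * \<beta>" and "S \<ge> 0"
    using \<open>n \<ge> 1\<close> by (simp_all add: S_def \<beta>_def msq_nonneg)
  obtain t where t: "\<alpha>^2 \<le> t" "t \<le> S" "(cmod (det (cmat A B)))^4 \<le> t * ((2 * S - t) / k) ^ k"
    using cmod_det_cmat_power4_le_column[of A B] unfolding S_def \<alpha>_def n_def k(2) k_def by blast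
  then have "\<kappa> \<ge> 0"
    unfolding \<kappa>_def using S \<open>S \<ge> 0\<close> \<open>n \<ge> 1\<close> by (simp add: divide_nonneg_pos)
  note t(3)
  also have "t * ((2 * S - t) / k) ^ k \<le> \<alpha>^2 * ((2 * S - \<alpha>^2) / k) ^ k"
  proof (cases "\<alpha>^2 = t")
    case False
    have "2 * S / (real k + 1) \<le> \<alpha>^2"
      using assms(5) \<open>n \<ge> 1\<close> unfolding k(3) S by simp
    then have "t * ((2 * S - t) / k) ^ k < \<alpha>^2 * ((2 * S - \<alpha>^2) / k) ^ k"
      using k(1) t(1,2) False \<open>0 \<le> S\<close>
      by (intro mult_complement_power_strict_decreasing) (auto simp: add.commute)
    then show ?thesis
      by simp
  qed simp
  also have "\<dots> = (sqrt \<bar>\<alpha>\<bar> * \<kappa> powr ((2 * real n - 1) / 4)) ^ 4"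
    using sqrt_abs_mult_powr_power4[OF \<open>\<kappa> \<ge> 0\<close>, of k \<alpha>] k(1)
    by (simp add: \<kappa>_def S mult.assoc k(2))
  finally show ?thesis
    using power_le_imp_le_base[of "cmod (det (cmat A B))" 3 "sqrt \<bar>\<alpha>\<bar> * \<kappa> powr ((2 * real n - 1) / 4)"]
    by simp
qed

theorem mainTheorem6:
  fixes A B :: "real^'n^'n" and \<alpha> \<beta> \<kappa> :: real and n :: nat
  assumes hn: "n = CARD('n)" and n2: "n \<ge> 2"
    and ha: "\<alpha> = msum A / real n"
    and hb: "\<beta> = (msq A + msq B) / real n"
    and hk: "\<kappa> = (2 * real n * \<beta> - \<alpha>^2) / (2 * real n - 1)"
    and bpos: "\<beta> > 0"
  shows "(\<alpha>^2 < \<beta> \<longrightarrow> cmod (det (cmat A B)) \<le> \<beta> powr (real n / 2))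
       \<and> (\<alpha>^2 = \<beta> \<longrightarrow>
            cmod (det (cmat A B)) \<le> sqrt \<bar>\<alpha>\<bar> * \<kappa> powr ((2 * real n - 1) / 4)
          \<and> sqrt \<bar>\<alpha>\<bar> * \<kappa> powr ((2 * real n - 1) / 4) = \<beta> powr (real n / 2))
       \<and> (\<alpha>^2 > \<beta> \<longrightarrow>
            cmod (det (cmat A B)) \<le> sqrt \<bar>\<alpha>\<bar> * \<kappa> powr ((2 * real n - 1) / 4)
          \<and> sqrt \<bar>\<alpha>\<bar> * \<kappa> powr ((2 * real n - 1) / 4) < \<beta> powr (real n / 2))"
proof -
  have n: "real n \<ge> 1"
    using n2 by simp
  have "\<alpha>^2 \<le> real n * \<beta>"
    using msum_power2_le_msq[of A] msq_nonneg[of B] n unfolding ha hb hn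
    by simp
  moreover have "real n * \<beta> > 0"
    using n bpos by simp
  ultimately have "\<alpha>^2 \<le> 2 * real n * \<beta>"
    by linarith
  moreover have "\<kappa> = \<beta>" if "\<alpha>^2 = \<beta>"
    using that n unfolding hk by (simp add: field_simps)
  moreover have "cmod (det (cmat A B)) \<le> \<beta> powr (real n / 2)"
    using cmod_det_cmat_le[of A B] unfolding hn[symmetric] hb[symmetric] .
  moreover have "cmod (det (cmat A B)) \<le> sqrt \<bar>\<alpha>\<bar> * \<kappa> powr ((2 * real n - 1) / 4)"
    if "\<beta> \<le> \<alpha>^2"
    using cmod_det_cmat_le_msum[of A B] that unfolding hn[symmetric] ha[symmetric] hb[symmetric] hk[symmetric]
    by blast
  ultimately show ?thesis
    using sqrt_abs_mult_powr_eq_powr_half[of \<alpha> \<beta> n] sqrt_abs_mult_powr_less_powr_half[of n \<beta> \<alpha>] n2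
    unfolding hk by auto
qed

end
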